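(* Let $\mu,\nu\in\mathcal{P}(\mathcal{X})$, $0<m_1\le m_2<\infty$, $K:\mathcal{X}\times\mathcal{X}\to(0,1]$ measurable with lower decay $l$, and let $(\alpha_1,\tilde\alpha_1)$, $(\alpha_2,\tilde\alpha_2)$ be pairs of tail functions (with $\mu(B_{m_1})>0$, $\nu(B_{m_1})>0$, $\alpha_1,\alpha_2>0$). Assume \begin{align*} &l(m_2)(1-\alpha_1(m_2))-\tilde\alpha_1(m_2)\ge0,\\ &\bar a:=\sup_{r\ge m_1}\big(l(r)\nu(B_r)(1-\alpha_1(r))-\tilde\alpha_1(m_2)\big)>0,\\ &\frac{1+\tilde\alpha_1(m_2)}{\bar a}\,\nu(B_r^{\mathsf c})\le\alpha_2(r)\ \text{ for all } r\ge m_1,\\ &\frac{\tilde\alpha_1(m_2)}{\bar a}\,\nu(B_r^{\mathsf c})\le\tilde\alpha_2(r)\ \text{ for all } r\ge m_2. \end{align*} Then $L_{K,\mu}(\mathcal{F}^{\mu}_{\alpha_1,\tilde\alpha_1})\subseteq\mathcal{F}^{\nu}_{\alpha_2,\tilde\alpha_2}$ and $L_{K^\top,\nu}(\mathcal{G}^{\nu}_{\alpha_2,\tilde\alpha_2})\subseteq\mathcal{G}^{\mu}_{\alpha_1,\tilde\alpha_1}$.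
   Context: $\mathcal{X}$ is a Polish space with metric $d_{\mathcal{X}}$, $x_0$ fixed, $B_r=\{x:d_{\mathcal{X}}(x_0,x)\le r\}$, $B_r^{\mathsf c}=\mathcal{X}\setminus B_r$. A non-increasing $l:[0,\infty)\to[0,\infty)$ is a lower decay of $K$ if $\inf_{x,y\in B_r}K(x,y)\ge l(r)$ for all $r>0$. $K^\top(x,y)=K(y,x)$; $L_{K,\mu}f(x)=\int K(x,y)f(y)\,\mu(dy)$. A tail function is a non-increasing $\alpha:(0,\infty)\to[0,\infty)$ with $\lim_{r\to\infty}\alpha(r)=0$. For $\rho\in\mathcal{P}(\mathcal{X})$: $\mathcal{F}^{\rho}_{\alpha,\tilde\alpha}$ is the set of $f\in L^2(\rho)$ with $f\mathbf 1_{B_{m_2}}\ge0$ $\rho$-a.s., $\int_{B_r^{\mathsf c}}f_+\,d\rho\le\alpha(r)\int f\,d\rho$ for all $r\ge m_1$, $\int_{B_r^{\mathsf c}}f_-\,d\rho\le\tilde\alpha(r)\int f\,d\rho$ for all $r\ge m_2$; $\mathcal{G}^{\rho}_{\alpha,\tilde\alpha}=\{g\in L^2(\rho):\int fg\,d\rho\ge0\ \forall f\in\mathcal{F}^{\rho}_{\alpha,\tilde\alpha}\}$. *)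

theory Defs
  imports "HOL-Probability.Probability"
begin

text \<open>Closed ball B_r around the fixed base point x0: cball x0 r = {x. dist x0 x \<le> r}.
  Its complement is - cball x0 r.\<close>

definition tail_function :: "(real \<Rightarrow> real) \<Rightarrow> bool" where
  "tail_function \<alpha> \<longleftrightarrow>
     (\<forall>r s. 0 < r \<longrightarrow> r \<le> s \<longrightarrow> \<alpha> s \<le> \<alpha> r) \<and>
     (\<forall>r. 0 < r \<longrightarrow> 0 \<le> \<alpha> r) \<and>
     (\<alpha> \<longlongrightarrow> 0) at_top"

definition lower_decay :: "'a::metric_space \<Rightarrow> ('a \<Rightarrow> 'a \<Rightarrow> real) \<Rightarrow> (real \<Rightarrow> real) \<Rightarrow> bool" where
  "lower_decay x0 K l \<longleftrightarrow>
     (\<forall>r s. 0 \<le> r \<longrightarrow> r \<le> s \<longrightarrow> l s \<le> l r) \<and>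
     (\<forall>r. 0 \<le> r \<longrightarrow> 0 \<le> l r) \<and>
     (\<forall>r>0. \<forall>x\<in>cball x0 r. \<forall>y\<in>cball x0 r. l r \<le> K x y)"

definition L2 :: "'a measure \<Rightarrow> ('a \<Rightarrow> real) \<Rightarrow> bool" where
  "L2 \<rho> f \<longleftrightarrow> f \<in> borel_measurable \<rho> \<and> integrable \<rho> (\<lambda>x. (f x)\<^sup>2)"

definition intop :: "('a \<Rightarrow> 'a \<Rightarrow> real) \<Rightarrow> 'a measure \<Rightarrow> ('a \<Rightarrow> real) \<Rightarrow> 'a \<Rightarrow> real" where
  "intop K \<mu> f x = (\<integral>y. K x y * f y \<partial>\<mu>)"

definition Fset :: "'a::metric_space \<Rightarrow> real \<Rightarrow> real \<Rightarrow> 'a measure \<Rightarrow> (real \<Rightarrow> real) \<Rightarrow> (real \<Rightarrow> real)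
    \<Rightarrow> ('a \<Rightarrow> real) set" where
  "Fset x0 m1 m2 \<rho> \<alpha> \<alpha>' = {f. L2 \<rho> f \<and>
     (AE x in \<rho>. x \<in> cball x0 m2 \<longrightarrow> 0 \<le> f x) \<and>
     (\<forall>r\<ge>m1. (LINT x:(- cball x0 r)|\<rho>. max (f x) 0) \<le> \<alpha> r * (\<integral>x. f x \<partial>\<rho>)) \<and>
     (\<forall>r\<ge>m2. (LINT x:(- cball x0 r)|\<rho>. max (- f x) 0) \<le> \<alpha>' r * (\<integral>x. f x \<partial>\<rho>))}"

definition Gset :: "'a::metric_space \<Rightarrow> real \<Rightarrow> real \<Rightarrow> 'a measure \<Rightarrow> (real \<Rightarrow> real) \<Rightarrow> (real \<Rightarrow> real)
    \<Rightarrow> ('a \<Rightarrow> real) set" where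
  "Gset x0 m1 m2 \<rho> \<alpha> \<alpha>' = {g. L2 \<rho> g \<and>
     (\<forall>f\<in>Fset x0 m1 m2 \<rho> \<alpha> \<alpha>'. 0 \<le> (\<integral>x. f x * g x \<partial>\<rho>))}"

end

theory Submission
  imports Defs
begin

(* Let f lie in the cone F for mu and put I = integral of f, which is nonnegative. Since f >= 0 on
   B_m2, the negative part of f has mass at most alpha1'(m2) I, so 0 < K <= 1 gives the uniform
   bounds -alpha1'(m2) I <= L f <= (1 + alpha1'(m2)) I, and the lower decay improves the lower bound
   on each ball B_r to (l(r) (1 - alpha1(r)) - alpha1'(m2)) I. Integrating against nu yields
   integral (L f) dnu >= abar I, and comparing the uniform bounds on the tails with this mass gives
   the tail conditions of the cone F for nu. The inclusion of the dual cones follows because, by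
   Fubini, the operator with the transposed kernel is the adjoint of L. *)

lemma SUP_mult_right_le:
  fixes \<phi> :: "'b \<Rightarrow> real"
  assumes "S \<noteq> {}" "0 \<le> I" "\<And>r. r \<in> S \<Longrightarrow> \<phi> r * I \<le> c"
  shows "(SUP r\<in>S. \<phi> r) * I \<le> c"
proof (cases "I = 0")
  case True
  then show ?thesis using assms(1,3) by fastforce
next
  case False
  with assms(2) have "0 < I" by simp
  then have "(SUP r\<in>S. \<phi> r) \<le> c / I"
    using assms(3) by (intro cSUP_least assms(1)) (simp add: pos_le_divide_eq)
  with \<open>0 < I\<close> show ?thesis by (simp add: pos_le_divide_eq)
qed

lemma mult_le_pos_part:
  fixes a k :: real
  assumes "0 \<le> k" "k \<le> 1"
  shows "k * a \<le> max a 0"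
  using assms mult_left_le_one_le[of a k] mult_nonneg_nonpos[of k a] by (cases "0 \<le> a") auto

lemma scaled_pos_part_minus_neg_part_le_mult:
  fixes a c k :: real
  assumes "0 \<le> c" "c \<le> k" "k \<le> 1"
  shows "c * max a 0 - max (- a) 0 \<le> k * a"
proof (cases "0 \<le> a")
  case True
  then show ?thesis using mult_right_mono[OF assms(2) True] by simp
next
  case False
  then show ?thesis using mult_right_mono_neg[OF assms(3), of a] by simp
qed

lemma integral_pos_part_eq:
  fixes f :: "'a \<Rightarrow> real"
  assumes "integrable M f"
  shows "(\<integral>x. max (f x) 0 \<partial>M) = (\<integral>x. f x \<partial>M) + (\<integral>x. max (- f x) 0 \<partial>M)"
proof -
  have "(\<integral>x. max (f x) 0 \<partial>M) = (\<integral>x. f x + max (- f x) 0 \<partial>M)"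
    by (rule Bochner_Integration.integral_cong) auto
  then show ?thesis using assms by simp
qed

lemma integral_ge_of_lower_bounds:
  fixes g :: "'a \<Rightarrow> real"
  assumes "prob_space M" "A \<in> sets M" "integrable M g"
    and "\<And>x. - b \<le> g x" "\<And>x. x \<in> A \<Longrightarrow> a - b \<le> g x"
  shows "measure M A * a - b \<le> (\<integral>x. g x \<partial>M)"
proof -
  interpret prob_space M by fact
  have ind: "integrable M (\<lambda>x. indicator A x * a)"
    using integrable_real_mult_indicator[OF assms(2) integrable_const[of a]]
    by (simp add: mult.commute)
  have "measure M A * a - b = (\<integral>x. indicator A x * a - b \<partial>M)"
    using ind assms(2) by (simp add: prob_space)
  also have "\<dots> \<le> (\<integral>x. g x \<partial>M)"
  proof (rule integral_mono)
    show "indicator A x * a - b \<le> g x" for x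
      using assms(4,5) by (cases "x \<in> A") auto
  qed (use ind assms(3) in auto)
  finally show ?thesis .
qed

lemma set_integral_pos_part_le:
  fixes g :: "'a \<Rightarrow> real"
  assumes "finite_measure M" "A \<in> sets M" "integrable M g" "\<And>x. g x \<le> C" "0 \<le> C"
  shows "(LINT x:A|M. max (g x) 0) \<le> C * measure M A"
proof -
  have "(LINT x:A|M. max (g x) 0) \<le> (LINT x:A|M. C)"
  proof (rule set_integral_mono)
    show "set_integrable M A (\<lambda>x. max (g x) 0)"
      unfolding set_integrable_def using assms(2,3) by (intro integrable_mult_indicator) auto
    show "set_integrable M A (\<lambda>x. C)"
      unfolding set_integrable_def
      using assms(1,2) by (intro integrable_mult_indicator finite_measure.integrable_const) auto
  qed (use assms(4,5) in simp)
  also have "\<dots> = C * measure M A"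
    using assms(1,2) by (simp add: set_integral_const finite_measure.emeasure_finite)
  finally show ?thesis .
qed

lemma (in pair_sigma_finite) integrable_product:
  fixes f :: "'a \<Rightarrow> real" and g :: "'b \<Rightarrow> real"
  assumes "integrable M1 f" "integrable M2 g"
  shows "integrable (M1 \<Otimes>\<^sub>M M2) (\<lambda>(x, y). f x * g y)"
proof (rule Fubini_integrable)
  have [measurable]: "f \<in> borel_measurable M1" "g \<in> borel_measurable M2"
    using assms by auto
  show "(\<lambda>(x, y). f x * g y) \<in> borel_measurable (M1 \<Otimes>\<^sub>M M2)"
    by measurable
  show "integrable M1 (\<lambda>x. \<integral>y. norm ((\<lambda>(x, y). f x * g y) (x, y)) \<partial>M2)"
    using assms by (simp add: abs_mult)
  show "AE x in M1. integrable M2 (\<lambda>y. (\<lambda>(x, y). f x * g y) (x, y))"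
    using assms(2) by simp
qed

lemma (in finite_measure) L2_if_bounded:
  assumes "g \<in> borel_measurable M" "\<And>x. \<bar>g x\<bar> \<le> C"
  shows "L2 M g"
  unfolding L2_def
proof
  show "integrable M (\<lambda>x. (g x)\<^sup>2)"
  proof (rule integrable_const_bound[where B = "C\<^sup>2"])
    show "AE x in M. norm ((g x)\<^sup>2) \<le> C\<^sup>2"
      using power_mono[OF assms(2) abs_ge_zero, where n=2] by (intro AE_I2) simp
  qed (use assms(1) in simp)
qed fact

lemma (in finite_measure) integrable_if_L2: "L2 M f \<Longrightarrow> integrable M f"
  unfolding L2_def by (blast intro: square_integrable_imp_integrable)

lemma measurable_kernel_swap:
  assumes "(\<lambda>(x, y). K x y) \<in> borel_measurable (M \<Otimes>\<^sub>M N)"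
  shows "(\<lambda>(x, y). K y x) \<in> borel_measurable (N \<Otimes>\<^sub>M M)"
  using measurable_comp[OF measurable_pair_swap' assms] by (simp add: comp_def split_beta')

lemma measurable_kernel_section:
  assumes "(\<lambda>(x, y). K x y) \<in> borel_measurable (borel \<Otimes>\<^sub>M borel)" "sets M = sets borel"
  shows "K x \<in> borel_measurable M"
  using measurable_Pair2[OF assms(1)] measurable_cong_sets[OF assms(2) refl] by auto

lemma borel_measurable_intop:
  assumes "sigma_finite_measure M" "sets M = sets borel" "sets N = sets borel"
    and "(\<lambda>(x, y). K x y) \<in> borel_measurable (borel \<Otimes>\<^sub>M borel)"
    and "f \<in> borel_measurable M"
  shows "intop K M f \<in> borel_measurable N"
proof -
  have "f \<in> borel_measurable borel"
    using assms(5) measurable_cong_sets[OF assms(2) refl] by blast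
  then have "(\<lambda>(x, y). K x y * f y) \<in> borel_measurable (borel \<Otimes>\<^sub>M borel)"
    using assms(4) by (simp add: split_beta')
  then have "(\<lambda>(x, y). K x y * f y) \<in> borel_measurable (N \<Otimes>\<^sub>M M)"
    using measurable_cong_sets[OF sets_pair_measure_cong[OF assms(3,2)] refl] by blast
  then show ?thesis
    unfolding intop_def[abs_def]
    by (rule sigma_finite_measure.borel_measurable_lebesgue_integral[OF assms(1)])
qed

lemma integrable_kernel_mult:
  fixes f :: "'a \<Rightarrow> real"
  assumes "k \<in> borel_measurable M" "\<And>y. \<bar>k y\<bar> \<le> 1" "integrable M f"
  shows "integrable M (\<lambda>y. k y * f y)"
proof (rule Bochner_Integration.integrable_bound[OF assms(3)])
  show "AE y in M. norm (k y * f y) \<le> norm (f y)"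
    using assms(2) by (auto simp: abs_mult intro!: mult_left_le_one_le)
qed (use assms in simp)

lemma abs_intop_le:
  fixes f :: "'a \<Rightarrow> real"
  assumes "K x \<in> borel_measurable M" "\<And>y. \<bar>K x y\<bar> \<le> 1" "integrable M f"
  shows "\<bar>intop K M f x\<bar> \<le> (\<integral>y. \<bar>f y\<bar> \<partial>M)"
proof -
  have "\<bar>intop K M f x\<bar> \<le> (\<integral>y. \<bar>K x y * f y\<bar> \<partial>M)"
    unfolding intop_def using integral_norm_bound[of M "\<lambda>y. K x y * f y"] by simp
  also have "\<dots> \<le> (\<integral>y. \<bar>f y\<bar> \<partial>M)"
    using assms integrable_abs[OF integrable_kernel_mult[OF assms]]
    by (intro integral_mono) (auto simp: abs_mult intro!: mult_left_le_one_le)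
  finally show ?thesis .
qed

lemma L2_intop:
  fixes f :: "'a::topological_space \<Rightarrow> real"
  assumes "finite_measure M" "finite_measure N" "sets M = sets borel" "sets N = sets borel"
    and "(\<lambda>(x, y). K x y) \<in> borel_measurable (borel \<Otimes>\<^sub>M borel)" "\<And>x y. \<bar>K x y\<bar> \<le> 1"
    and "integrable M f"
  shows "L2 N (intop K M f)"
proof (rule finite_measure.L2_if_bounded[OF assms(2)])
  show "intop K M f \<in> borel_measurable N"
    using borel_measurable_integrable[OF assms(7)]
    by (rule borel_measurable_intop[OF finite_measure.sigma_finite_measure[OF assms(1)] assms(3-5)])
  show "\<bar>intop K M f x\<bar> \<le> (\<integral>y. \<bar>f y\<bar> \<partial>M)" for x
    by (rule abs_intop_le[OF measurable_kernel_section[OF assms(5,3)] assms(6,7)])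
qed

lemma intop_le_integral_pos_part:
  fixes f :: "'a \<Rightarrow> real"
  assumes "K x \<in> borel_measurable M" "\<And>y. 0 \<le> K x y" "\<And>y. K x y \<le> 1" "integrable M f"
  shows "intop K M f x \<le> (\<integral>y. max (f y) 0 \<partial>M)"
  unfolding intop_def
proof (rule integral_mono)
  show "integrable M (\<lambda>y. K x y * f y)"
    using assms by (intro integrable_kernel_mult) simp_all
qed (use assms in \<open>auto intro: mult_le_pos_part\<close>)

lemma intop_ge_set_pos_part_minus_neg_part:
  fixes f :: "'a \<Rightarrow> real"
  assumes "K x \<in> borel_measurable M" "\<And>y. 0 \<le> K x y" "\<And>y. K x y \<le> 1" "integrable M f"
    and "A \<in> sets M" "0 \<le> c" "\<And>y. y \<in> A \<Longrightarrow> c \<le> K x y"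
  shows "c * (LINT y:A|M. max (f y) 0) - (\<integral>y. max (- f y) 0 \<partial>M) \<le> intop K M f x"
proof -
  have pos: "integrable M (\<lambda>y. indicator A y * max (f y) 0)"
    using integrable_mult_indicator[OF assms(5), of "\<lambda>y. max (f y) 0"] assms(4) by simp
  have "c * (LINT y:A|M. max (f y) 0) - (\<integral>y. max (- f y) 0 \<partial>M)
      = (\<integral>y. c * indicator A y * max (f y) 0 - max (- f y) 0 \<partial>M)"
    unfolding set_lebesgue_integral_def using pos assms(4) by (simp add: mult.assoc)
  also have "\<dots> \<le> intop K M f x"
    unfolding intop_def
  proof (rule integral_mono)
    show "integrable M (\<lambda>y. c * indicator A y * max (f y) 0 - max (- f y) 0)"
      using pos assms(4) by (simp add: mult.assoc)
    show "integrable M (\<lambda>y. K x y * f y)"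
      using assms by (intro integrable_kernel_mult) simp_all
    show "c * indicator A y * max (f y) 0 - max (- f y) 0 \<le> K x y * f y" for y
      using scaled_pos_part_minus_neg_part_le_mult[of c "K x y" "f y"]
        scaled_pos_part_minus_neg_part_le_mult[of 0 "K x y" "f y"] assms(2,3,6,7)
      by (cases "y \<in> A") auto
  qed
  finally show ?thesis .
qed

lemma intop_adjoint:
  fixes f h :: "'a::topological_space \<Rightarrow> real"
  assumes "sigma_finite_measure \<mu>" "sigma_finite_measure \<nu>" "sets \<mu> = sets borel" "sets \<nu> = sets borel"
    and "(\<lambda>(x, y). K x y) \<in> borel_measurable (borel \<Otimes>\<^sub>M borel)" "\<And>x y. \<bar>K x y\<bar> \<le> 1"
    and "integrable \<mu> f" "integrable \<nu> h"
  shows "(\<integral>x. f x * intop (\<lambda>x y. K y x) \<nu> h x \<partial>\<mu>) = (\<integral>y. intop K \<mu> f y * h y \<partial>\<nu>)"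
proof -
  interpret pair_sigma_finite \<mu> \<nu>
    using assms(1,2) by (simp add: pair_sigma_finite_def)
  have sets_eq: "sets (\<mu> \<Otimes>\<^sub>M \<nu>) = sets (borel \<Otimes>\<^sub>M borel)"
    by (rule sets_pair_measure_cong[OF assms(3,4)])
  have [measurable]: "f \<in> borel_measurable borel" "h \<in> borel_measurable borel"
    using borel_measurable_integrable[OF assms(7)] borel_measurable_integrable[OF assms(8)]
      measurable_cong_sets[OF assms(3) refl] measurable_cong_sets[OF assms(4) refl] by blast+
  have [measurable]: "(\<lambda>(x, y). K y x) \<in> borel_measurable (borel \<Otimes>\<^sub>M borel)"
    by (rule measurable_kernel_swap[OF assms(5)])
  have "(\<lambda>(x, y). f x * (K y x * h y)) \<in> borel_measurable (\<mu> \<Otimes>\<^sub>M \<nu>)"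
    by (subst measurable_cong_sets[OF sets_eq refl]) measurable
  then have "integrable (\<mu> \<Otimes>\<^sub>M \<nu>) (\<lambda>(x, y). f x * (K y x * h y))"
  proof (intro Bochner_Integration.integrable_bound[OF
        integrable_product[OF integrable_abs[OF assms(7)] integrable_abs[OF assms(8)]]])
    show "AE p in \<mu> \<Otimes>\<^sub>M \<nu>.
        norm ((\<lambda>(x, y). f x * (K y x * h y)) p) \<le> norm ((\<lambda>(x, y). \<bar>f x\<bar> * \<bar>h y\<bar>) p)"
      using assms(6) by (intro AE_I2)
        (auto simp: abs_mult split: prod.split intro!: mult_left_mono mult_left_le_one_le)
  qed
  note Fubini = Fubini_integral[symmetric, OF this]
  have "(\<integral>x. f x * intop (\<lambda>x y. K y x) \<nu> h x \<partial>\<mu>) = (\<integral>x. (\<integral>y. f x * (K y x * h y) \<partial>\<nu>) \<partial>\<mu>)"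
    unfolding intop_def by simp
  also have "\<dots> = (\<integral>y. (\<integral>x. f x * (K y x * h y) \<partial>\<mu>) \<partial>\<nu>)"
    by (rule Fubini)
  also have "\<dots> = (\<integral>y. intop K \<mu> f y * h y \<partial>\<nu>)"
    unfolding intop_def by (simp add: ac_simps flip: integral_mult_left_zero integral_mult_right_zero)
  finally show ?thesis .
qed

lemma Fset_integral_nonneg:
  assumes "f \<in> Fset x0 m1 m2 \<rho> \<alpha> \<alpha>'" "0 < \<alpha> m1"
  shows "0 \<le> (\<integral>x. f x \<partial>\<rho>)"
proof -
  have "0 \<le> (LINT x:(- cball x0 m1)|\<rho>. max (f x) 0)"
    unfolding set_lebesgue_integral_def
    by (intro Bochner_Integration.integral_nonneg) (simp add: indicator_def)
  also have "\<dots> \<le> \<alpha> m1 * (\<integral>x. f x \<partial>\<rho>)"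
    using assms(1) by (simp add: Fset_def)
  finally show ?thesis using assms(2) by (simp add: zero_le_mult_iff)
qed

lemma Fset_integral_neg_part_le:
  fixes x0 :: "'a::metric_space"
  assumes "finite_measure \<rho>" "sets \<rho> = sets borel" "f \<in> Fset x0 m1 m2 \<rho> \<alpha> \<alpha>'"
  shows "(\<integral>x. max (- f x) 0 \<partial>\<rho>) \<le> \<alpha>' m2 * (\<integral>x. f x \<partial>\<rho>)"
proof -
  have f: "integrable \<rho> f" "AE x in \<rho>. x \<in> cball x0 m2 \<longrightarrow> 0 \<le> f x"
    using assms(3) finite_measure.integrable_if_L2[OF assms(1)] by (auto simp: Fset_def)
  have "- cball x0 m2 \<in> sets \<rho>"
    using assms(2) by simp
  moreover have "(\<lambda>x. max (- f x) 0) \<in> borel_measurable \<rho>"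
    using f(1) by auto
  ultimately have "(\<integral>x. max (- f x) 0 \<partial>\<rho>) = (LINT x:(- cball x0 m2)|\<rho>. max (- f x) 0)"
    unfolding set_lebesgue_integral_def
  proof (intro integral_cong_AE borel_measurable_scaleR borel_measurable_indicator)
    show "AE x in \<rho>. max (- f x) 0 = indicator (- cball x0 m2) x *\<^sub>R max (- f x) 0"
      using f(2) by eventually_elim (auto simp: indicator_def)
  qed
  also have "\<dots> \<le> \<alpha>' m2 * (\<integral>x. f x \<partial>\<rho>)"
    using assms(3) by (simp add: Fset_def)
  finally show ?thesis .
qed

lemma Fset_set_integral_pos_part_ge:
  fixes x0 :: "'a::metric_space"
  assumes "finite_measure \<rho>" "sets \<rho> = sets borel" "f \<in> Fset x0 m1 m2 \<rho> \<alpha> \<alpha>'" "m1 \<le> r"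
  shows "(1 - \<alpha> r) * (\<integral>x. f x \<partial>\<rho>) \<le> (LINT x:cball x0 r|\<rho>. max (f x) 0)"
proof -
  have f: "integrable \<rho> f"
    using assms(3) finite_measure.integrable_if_L2[OF assms(1)] by (simp add: Fset_def)
  have B: "cball x0 r \<in> sets \<rho>" "- cball x0 r \<in> sets \<rho>"
    using assms(2) by simp_all
  have "(\<integral>x. max (f x) 0 \<partial>\<rho>)
      = (\<integral>x. indicator (cball x0 r) x * max (f x) 0 + indicator (- cball x0 r) x * max (f x) 0 \<partial>\<rho>)"
    by (rule Bochner_Integration.integral_cong) (auto simp: indicator_def)
  also have "\<dots> = (LINT x:cball x0 r|\<rho>. max (f x) 0) + (LINT x:(- cball x0 r)|\<rho>. max (f x) 0)"
    unfolding set_lebesgue_integral_def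
    using f integrable_mult_indicator[OF B(1), of "\<lambda>x. max (f x) 0"]
      integrable_mult_indicator[OF B(2), of "\<lambda>x. max (f x) 0"] by simp
  finally have "(LINT x:cball x0 r|\<rho>. max (f x) 0)
      = (\<integral>x. f x \<partial>\<rho>) + (\<integral>x. max (- f x) 0 \<partial>\<rho>) - (LINT x:(- cball x0 r)|\<rho>. max (f x) 0)"
    using integral_pos_part_eq[OF f] by simp
  moreover have "(LINT x:(- cball x0 r)|\<rho>. max (f x) 0) \<le> \<alpha> r * (\<integral>x. f x \<partial>\<rho>)"
    using assms(3,4) by (simp add: Fset_def)
  moreover have "0 \<le> (\<integral>x. max (- f x) 0 \<partial>\<rho>)"
    by (intro Bochner_Integration.integral_nonneg) simp
  ultimately show ?thesis
    unfolding left_diff_distrib by linarith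
qed

lemma intop_Fset_bounds:
  fixes x0 :: "'a::metric_space"
  assumes "finite_measure \<mu>" "sets \<mu> = sets borel"
    and "(\<lambda>(x, y). K x y) \<in> borel_measurable (borel \<Otimes>\<^sub>M borel)"
    and "\<And>x y. 0 \<le> K x y" "\<And>x y. K x y \<le> 1"
    and "lower_decay x0 K l" "f \<in> Fset x0 m1 m2 \<mu> \<alpha> \<alpha>'" "0 < m1"
  shows "intop K \<mu> f x \<le> (1 + \<alpha>' m2) * (\<integral>y. f y \<partial>\<mu>)"
    and "- (\<alpha>' m2 * (\<integral>y. f y \<partial>\<mu>)) \<le> intop K \<mu> f x"
    and "m1 \<le> r \<Longrightarrow> x \<in> cball x0 r
      \<Longrightarrow> (l r * (1 - \<alpha> r) - \<alpha>' m2) * (\<integral>y. f y \<partial>\<mu>) \<le> intop K \<mu> f x"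
proof -
  have f: "integrable \<mu> f"
    using assms(7) finite_measure.integrable_if_L2[OF assms(1)] by (simp add: Fset_def)
  have Kx: "K x \<in> borel_measurable \<mu>"
    by (rule measurable_kernel_section[OF assms(3,2)])
  note neg = Fset_integral_neg_part_le[OF assms(1,2,7)]
  show "intop K \<mu> f x \<le> (1 + \<alpha>' m2) * (\<integral>y. f y \<partial>\<mu>)"
    using intop_le_integral_pos_part[where K = K and x = x, OF Kx assms(4,5) f]
      integral_pos_part_eq[OF f] neg
    by (simp add: distrib_right)
  show "- (\<alpha>' m2 * (\<integral>y. f y \<partial>\<mu>)) \<le> intop K \<mu> f x"
    using intop_ge_set_pos_part_minus_neg_part[where K = K and x = x, OF Kx assms(4,5) f, of "{}" 0] neg
    by simp
  assume r: "m1 \<le> r" and x: "x \<in> cball x0 r"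
  have l: "0 \<le> l r" "\<And>y. y \<in> cball x0 r \<Longrightarrow> l r \<le> K x y"
    using assms(6,8) r x by (auto simp: lower_decay_def)
  have "(l r * (1 - \<alpha> r) - \<alpha>' m2) * (\<integral>y. f y \<partial>\<mu>)
      = l r * ((1 - \<alpha> r) * (\<integral>y. f y \<partial>\<mu>)) - \<alpha>' m2 * (\<integral>y. f y \<partial>\<mu>)"
    by (simp add: algebra_simps)
  also have "\<dots> \<le> l r * (LINT y:cball x0 r|\<mu>. max (f y) 0) - (\<integral>y. max (- f y) 0 \<partial>\<mu>)"
    using mult_left_mono[OF Fset_set_integral_pos_part_ge[OF assms(1,2,7) r] l(1)] neg by simp
  also have "\<dots> \<le> intop K \<mu> f x"
    using assms(2)
    by (intro intop_ge_set_pos_part_minus_neg_part[where K = K and x = x, OF Kx assms(4,5) f] l) simp_all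
  finally show "(l r * (1 - \<alpha> r) - \<alpha>' m2) * (\<integral>y. f y \<partial>\<mu>) \<le> intop K \<mu> f x" .
qed

lemma Fset_memI_uniform_bounds:
  fixes x0 :: "'a::metric_space"
  assumes "finite_measure \<nu>" "sets \<nu> = sets borel" "L2 \<nu> g"
    and "0 \<le> I" "0 \<le> a'" "0 < abar"
    and "\<And>x. g x \<le> (1 + a') * I" "\<And>x. - (a' * I) \<le> g x" "abar * I \<le> (\<integral>x. g x \<partial>\<nu>)"
    and "\<And>x. x \<in> cball x0 m2 \<Longrightarrow> 0 \<le> g x"
    and "\<And>r. m1 \<le> r \<Longrightarrow> 0 \<le> \<alpha> r" "\<And>r. m2 \<le> r \<Longrightarrow> 0 \<le> \<alpha>' r"
    and "\<And>r. m1 \<le> r \<Longrightarrow> (1 + a') / abar * measure \<nu> (- cball x0 r) \<le> \<alpha> r"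
    and "\<And>r. m2 \<le> r \<Longrightarrow> a' / abar * measure \<nu> (- cball x0 r) \<le> \<alpha>' r"
  shows "g \<in> Fset x0 m1 m2 \<nu> \<alpha> \<alpha>'"
proof -
  have g: "integrable \<nu> g"
    using assms(3) by (rule finite_measure.integrable_if_L2[OF assms(1)])
  have B: "- cball x0 r \<in> sets \<nu>" for r
    using assms(2) by simp
  have tail: "c * I * measure \<nu> (- cball x0 r) \<le> \<beta> * (\<integral>x. g x \<partial>\<nu>)"
    if "c / abar * measure \<nu> (- cball x0 r) \<le> \<beta>" "0 \<le> \<beta>" for c \<beta> r
  proof -
    have "c * I * measure \<nu> (- cball x0 r) = (c / abar * measure \<nu> (- cball x0 r)) * (abar * I)"
      using assms(6) by simp
    also have "\<dots> \<le> \<beta> * (abar * I)"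
      using that(1) assms(4,6) by (intro mult_right_mono) auto
    also have "\<dots> \<le> \<beta> * (\<integral>x. g x \<partial>\<nu>)"
      using assms(9) that(2) by (rule mult_left_mono)
    finally show ?thesis .
  qed
  have "(LINT x:(- cball x0 r)|\<nu>. max (g x) 0) \<le> \<alpha> r * (\<integral>x. g x \<partial>\<nu>)" if r: "m1 \<le> r" for r
  proof -
    have "(LINT x:(- cball x0 r)|\<nu>. max (g x) 0) \<le> (1 + a') * I * measure \<nu> (- cball x0 r)"
      using assms(4,5,7) by (intro set_integral_pos_part_le[OF assms(1) B g]) auto
    also have "\<dots> \<le> \<alpha> r * (\<integral>x. g x \<partial>\<nu>)"
      using assms(11,13) r by (intro tail) auto
    finally show ?thesis .
  qed
  moreover have "(LINT x:(- cball x0 r)|\<nu>. max (- g x) 0) \<le> \<alpha>' r * (\<integral>x. g x \<partial>\<nu>)"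
    if r: "m2 \<le> r" for r
  proof -
    have "(LINT x:(- cball x0 r)|\<nu>. max (- g x) 0) \<le> a' * I * measure \<nu> (- cball x0 r)"
      using assms(4,5,8)
      by (intro set_integral_pos_part_le[OF assms(1) B integrable_minus[OF g]]) (auto simp: minus_le_iff)
    also have "\<dots> \<le> \<alpha>' r * (\<integral>x. g x \<partial>\<nu>)"
      using assms(12,14) r by (intro tail) auto
    finally show ?thesis .
  qed
  ultimately show ?thesis
    unfolding Fset_def using assms(3,10) by auto
qed

lemma intop_mem_Fset:
  fixes x0 :: "'a::metric_space"
  assumes "prob_space \<mu>" "sets \<mu> = sets borel" "prob_space \<nu>" "sets \<nu> = sets borel"
    and "0 < m1" "m1 \<le> m2"
    and "(\<lambda>(x, y). K x y) \<in> borel_measurable (borel \<Otimes>\<^sub>M borel)"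
    and "\<And>x y. 0 \<le> K x y" "\<And>x y. K x y \<le> 1" "lower_decay x0 K l"
    and "0 < \<alpha>1 m1" "0 \<le> \<alpha>1' m2" "\<And>r. m1 \<le> r \<Longrightarrow> 0 \<le> \<alpha>2 r" "\<And>r. m2 \<le> r \<Longrightarrow> 0 \<le> \<alpha>2' r"
    and "l m2 * (1 - \<alpha>1 m2) - \<alpha>1' m2 \<ge> 0"
    and abar_def: "abar = (SUP r\<in>{m1..}. l r * measure \<nu> (cball x0 r) * (1 - \<alpha>1 r) - \<alpha>1' m2)"
    and "abar > 0"
    and "\<And>r. r \<ge> m1 \<Longrightarrow> (1 + \<alpha>1' m2) / abar * measure \<nu> (- cball x0 r) \<le> \<alpha>2 r"
    and "\<And>r. r \<ge> m2 \<Longrightarrow> \<alpha>1' m2 / abar * measure \<nu> (- cball x0 r) \<le> \<alpha>2' r"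
    and f: "f \<in> Fset x0 m1 m2 \<mu> \<alpha>1 \<alpha>1'"
  shows "intop K \<mu> f \<in> Fset x0 m1 m2 \<nu> \<alpha>2 \<alpha>2'"
proof -
  interpret \<mu>: prob_space \<mu> by fact
  interpret \<nu>: prob_space \<nu> by fact
  define I where "I = (\<integral>y. f y \<partial>\<mu>)"
  define g where "g = intop K \<mu> f"
  have I: "0 \<le> I"
    unfolding I_def using f assms(11) by (rule Fset_integral_nonneg)
  note bounds = intop_Fset_bounds[OF \<mu>.finite_measure_axioms assms(2,7-10) f assms(5),
      folded I_def g_def]
  have "\<bar>K x y\<bar> \<le> 1" for x y
    using assms(8,9) by simp
  then have L2: "L2 \<nu> g"
    unfolding g_def using f \<mu>.integrable_if_L2
    by (intro L2_intop \<mu>.finite_measure_axioms \<nu>.finite_measure_axioms assms(2,4,7))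
      (auto simp: Fset_def)
  have mass: "abar * I \<le> (\<integral>x. g x \<partial>\<nu>)"
    unfolding abar_def
  proof (rule SUP_mult_right_le[OF _ I])
    fix r assume r: "r \<in> {m1..}"
    have "measure \<nu> (cball x0 r) * (l r * (1 - \<alpha>1 r) * I) - \<alpha>1' m2 * I \<le> (\<integral>x. g x \<partial>\<nu>)"
      using r assms(4) bounds(2,3)
      by (intro integral_ge_of_lower_bounds[OF assms(3) _ \<nu>.integrable_if_L2[OF L2]])
        (auto simp: left_diff_distrib)
    then show "(l r * measure \<nu> (cball x0 r) * (1 - \<alpha>1 r) - \<alpha>1' m2) * I \<le> (\<integral>x. g x \<partial>\<nu>)"
      by (simp add: algebra_simps)
  qed simp
  have pos: "0 \<le> g x" if "x \<in> cball x0 m2" for x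
    using bounds(3)[OF assms(6) that] mult_nonneg_nonneg[OF assms(15) I] by linarith
  show ?thesis
    unfolding g_def[symmetric]
    by (rule Fset_memI_uniform_bounds[OF \<nu>.finite_measure_axioms assms(4) L2 I assms(12,17)
          bounds(1,2) mass pos assms(13,14,18,19)])
qed

lemma intop_transpose_mem_Gset:
  fixes h :: "'a::metric_space \<Rightarrow> real"
  assumes "prob_space \<mu>" "sets \<mu> = sets borel" "prob_space \<nu>" "sets \<nu> = sets borel"
    and "(\<lambda>(x, y). K x y) \<in> borel_measurable (borel \<Otimes>\<^sub>M borel)" "\<And>x y. \<bar>K x y\<bar> \<le> 1"
    and "\<And>f. f \<in> Fset x0 m1 m2 \<mu> \<alpha>1 \<alpha>1' \<Longrightarrow> intop K \<mu> f \<in> Fset x0 m1 m2 \<nu> \<alpha>2 \<alpha>2'"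
    and h: "h \<in> Gset x0 m1 m2 \<nu> \<alpha>2 \<alpha>2'"
  shows "intop (\<lambda>x y. K y x) \<nu> h \<in> Gset x0 m1 m2 \<mu> \<alpha>1 \<alpha>1'"
proof -
  interpret \<mu>: prob_space \<mu> by fact
  interpret \<nu>: prob_space \<nu> by fact
  have "integrable \<nu> h"
    using h \<nu>.integrable_if_L2 by (simp add: Gset_def)
  then have "L2 \<mu> (intop (\<lambda>x y. K y x) \<nu> h)"
    using measurable_kernel_swap[OF assms(5)] assms(6)
    by (intro L2_intop \<nu>.finite_measure_axioms \<mu>.finite_measure_axioms assms(2,4))
  moreover have "(\<integral>x. f x * intop (\<lambda>x y. K y x) \<nu> h x \<partial>\<mu>) = (\<integral>y. intop K \<mu> f y * h y \<partial>\<nu>)"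
    if "f \<in> Fset x0 m1 m2 \<mu> \<alpha>1 \<alpha>1'" for f
    using that \<open>integrable \<nu> h\<close> \<mu>.integrable_if_L2 assms(2,4-6)
    by (intro intop_adjoint \<mu>.sigma_finite_measure_axioms \<nu>.sigma_finite_measure_axioms)
      (auto simp: Fset_def)
  ultimately show ?thesis
    using assms(7) h by (simp add: Gset_def)
qed

theorem proposition4p1:
  fixes x0 :: "'a::polish_space"
    and \<mu> \<nu> :: "'a measure"
    and m1 m2 :: real
    and K :: "'a \<Rightarrow> 'a \<Rightarrow> real"
    and l \<alpha>1 \<alpha>1' \<alpha>2 \<alpha>2' :: "real \<Rightarrow> real"
    and abar :: real
  assumes "prob_space \<mu>" "sets \<mu> = sets borel"
    and "prob_space \<nu>" "sets \<nu> = sets borel"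
    and "0 < m1" "m1 \<le> m2"
    and "(\<lambda>(x, y). K x y) \<in> borel_measurable (borel \<Otimes>\<^sub>M borel)"
    and "\<And>x y. 0 < K x y \<and> K x y \<le> 1"
    and "lower_decay x0 K l"
    and "tail_function \<alpha>1" "tail_function \<alpha>1'"
    and "tail_function \<alpha>2" "tail_function \<alpha>2'"
    and "measure \<mu> (cball x0 m1) > 0" "measure \<nu> (cball x0 m1) > 0"
    and "\<And>r. 0 < r \<Longrightarrow> \<alpha>1 r > 0" "\<And>r. 0 < r \<Longrightarrow> \<alpha>2 r > 0"
    and "l m2 * (1 - \<alpha>1 m2) - \<alpha>1' m2 \<ge> 0"
    and abar_def: "abar = (SUP r\<in>{m1..}. l r * measure \<nu> (cball x0 r) * (1 - \<alpha>1 r) - \<alpha>1' m2)"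
    and "abar > 0"
    and "\<And>r. r \<ge> m1 \<Longrightarrow> (1 + \<alpha>1' m2) / abar * measure \<nu> (- cball x0 r) \<le> \<alpha>2 r"
    and "\<And>r. r \<ge> m2 \<Longrightarrow> \<alpha>1' m2 / abar * measure \<nu> (- cball x0 r) \<le> \<alpha>2' r"
  shows "intop K \<mu> ` Fset x0 m1 m2 \<mu> \<alpha>1 \<alpha>1' \<subseteq> Fset x0 m1 m2 \<nu> \<alpha>2 \<alpha>2' \<and>
         intop (\<lambda>x y. K y x) \<nu> ` Gset x0 m1 m2 \<nu> \<alpha>2 \<alpha>2' \<subseteq> Gset x0 m1 m2 \<mu> \<alpha>1 \<alpha>1'"
proof -
  have K: "\<And>x y. 0 \<le> K x y" "\<And>x y. K x y \<le> 1"
    using assms(8) by (auto intro: less_imp_le)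
  have tails: "0 \<le> \<alpha>1' m2" "\<And>r. m1 \<le> r \<Longrightarrow> 0 \<le> \<alpha>2 r" "\<And>r. m2 \<le> r \<Longrightarrow> 0 \<le> \<alpha>2' r"
    using assms(5,6,11,13,17) by (auto simp: tail_function_def intro: less_imp_le)
  have F: "intop K \<mu> f \<in> Fset x0 m1 m2 \<nu> \<alpha>2 \<alpha>2'" if "f \<in> Fset x0 m1 m2 \<mu> \<alpha>1 \<alpha>1'" for f
    using assms(1-7) K assms(9) assms(16)[OF assms(5)] tails assms(18-22) that
    by (rule intop_mem_Fset)
  have K_abs: "\<bar>K x y\<bar> \<le> 1" for x y
    using K by simp
  have "intop (\<lambda>x y. K y x) \<nu> h \<in> Gset x0 m1 m2 \<mu> \<alpha>1 \<alpha>1'"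
    if "h \<in> Gset x0 m1 m2 \<nu> \<alpha>2 \<alpha>2'" for h
    using assms(1-4,7) K_abs F that by (rule intop_transpose_mem_Gset)
  with F show ?thesis
    by blast
qed

end
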